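(* Let $\mathcal{M}\subset\mathbb{R}^d$ be a Riemannian manifold, let $\mathcal{Z}=\mathcal{Z}_1\times\dots\times\mathcal{Z}_s$ be a Cartesian product of finite nonempty sets, and let $\mathcal{E}$ be a finite nonempty set. Let $p_{(z,e)}$, $(z,e)\in\mathcal{Z}\times\mathcal{E}$, be non-negative scalars with $\sum_{e\in\mathcal{E}}p_{(z,e)}=1$ for each $z\in\mathcal{Z}$, and let $\{\mathbf{u}_{(z,e)}\mid(z,e)\in\mathcal{Z}\times\mathcal{E}\}\subset\mathcal{M}$ have weighted intrinsic mean $\mu$ with respect to the weights $w_{(z,e)}=p_{(z,e)}/\sum_{(z',e')}p_{(z',e')}$. For $z\in\mathcal{Z}$ put $\mathbf{v}_z=\sum_{e\in\mathcal{E}}p_{(z,e)}\mathrm{Log}_\mu(\mathbf{u}_{(z,e)})$ and $\mathbf{u}_z=\mathrm{Exp}_\mu(\mathbf{v}_z)$. Then the set $\{\mathbf{u}_z\}_{z\in\mathcal{Z}}$ has (unweighted) intrinsic mean $\mu$.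
   Context: $\mathcal{M}$ has intrinsic (geodesic) distance $d_\mathcal{M}$. For $\mu\in\mathcal{M}$, $T_\mu\mathcal{M}$ is the tangent space, $\mathrm{Exp}_\mu$ the exponential map and $\mathrm{Log}_\mu=\mathrm{Exp}_\mu^{-1}$ its (local) inverse. Given points $\mathbf{u}_1,\dots,\mathbf{u}_N\in\mathcal{M}$ and weights $w_i\ge0$ with $\sum_iw_i=1$, the weighted intrinsic mean is $\arg\min_{\mathbf{u}\in\mathcal{M}}\sum_iw_i\,d_\mathcal{M}(\mathbf{u},\mathbf{u}_i)^2$ (unweighted: $w_i=1/N$). Standing assumption of the paper: intrinsic means exist and are unique, the logarithmic map is defined at the relevant points, and a point $\mu$ is the (weighted) intrinsic mean of a set exactly when it satisfies the centering property $\sum_iw_i\,\mathrm{Log}_\mu(\mathbf{u}_i)=0$. *)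

theory Defs
  imports "HOL-Analysis.Analysis"
begin

definition weighted_intrinsic_mean ::
  "'a set \<Rightarrow> ('a \<Rightarrow> 'a \<Rightarrow> real) \<Rightarrow> 'i set \<Rightarrow> ('i \<Rightarrow> real) \<Rightarrow> ('i \<Rightarrow> 'a) \<Rightarrow> 'a \<Rightarrow> bool"
  where "weighted_intrinsic_mean M dM I w u mu \<longleftrightarrow>
     mu \<in> M \<and> (\<forall>x\<in>M. (\<Sum>i\<in>I. w i * (dM mu (u i))\<^sup>2) \<le> (\<Sum>i\<in>I. w i * (dM x (u i))\<^sup>2))"

definition intrinsic_mean ::
  "'a set \<Rightarrow> ('a \<Rightarrow> 'a \<Rightarrow> real) \<Rightarrow> 'i set \<Rightarrow> ('i \<Rightarrow> 'a) \<Rightarrow> 'a \<Rightarrow> bool"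
  where "intrinsic_mean M dM I u mu \<longleftrightarrow>
     weighted_intrinsic_mean M dM I (\<lambda>_. 1 / real (card I)) u mu"

text \<open>Standing assumption of the paper (for families indexed by the type 'i):
  a point of M is the weighted intrinsic mean of a finite nonempty weighted family in M
  exactly when it satisfies the centering property.\<close>
definition centering_characterization ::
  "'a::real_vector set \<Rightarrow> ('a \<Rightarrow> 'a \<Rightarrow> real) \<Rightarrow> ('a \<Rightarrow> 'a \<Rightarrow> 'a) \<Rightarrow> 'i itself \<Rightarrow> bool"
  where "centering_characterization M dM Log (_ :: 'i itself) \<longleftrightarrow>
     (\<forall>(I::'i set) w u mu. finite I \<longrightarrow> I \<noteq> {} \<longrightarrow> (\<forall>i\<in>I. w i \<ge> 0) \<longrightarrow>
        (\<Sum>i\<in>I. w i) = 1 \<longrightarrow> u ` I \<subseteq> M \<longrightarrow> mu \<in> M \<longrightarrow>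
        (weighted_intrinsic_mean M dM I w u mu \<longleftrightarrow> (\<Sum>i\<in>I. w i *\<^sub>R Log mu (u i)) = 0))"

end

theory Submission
  imports Defs
begin

text \<open>Since every row \<open>p (z, \<cdot>)\<close> sums to 1, the total mass of \<open>p\<close> is \<open>|Z|\<close>, so the weights are
  \<open>w = p / |Z|\<close>. Grouping the centering identity of \<open>\<mu>\<close> for the family \<open>u (z, e)\<close> by rows gives
  \<open>(1 / |Z|) \<Sum>\<^sub>z v z = 0\<close>, and as \<open>Log \<mu> (Exp \<mu> (v z)) = v z\<close> this is exactly the
  centering identity of \<open>\<mu>\<close> for the points \<open>Exp \<mu> (v z)\<close>.\<close>

lemma set_Cons_eq_image: "set_Cons A B = (\<lambda>(a, xs). a # xs) ` (A \<times> B)"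
  by (auto simp: set_Cons_def)

lemma finite_listset: "\<forall>A\<in>set As. finite A \<Longrightarrow> finite (listset As)"
  by (induction As) (auto simp: set_Cons_eq_image)

lemma listset_eq_empty_iff: "listset As = {} \<longleftrightarrow> (\<exists>A\<in>set As. A = {})"
  by (induction As) (auto simp: set_Cons_eq_image)

lemma weighted_intrinsic_mean_iff_centered:
  fixes I :: "'i set"
  assumes "centering_characterization M dM Log TYPE('i)"
    and "finite I" "I \<noteq> {}" "\<forall>i\<in>I. w i \<ge> 0" "(\<Sum>i\<in>I. w i) = 1" "u ` I \<subseteq> M" "mu \<in> M"
  shows "weighted_intrinsic_mean M dM I w u mu \<longleftrightarrow> (\<Sum>i\<in>I. w i *\<^sub>R Log mu (u i)) = 0"
  using assms unfolding centering_characterization_def by blast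

lemma intrinsic_mean_iff_sum_Log_eq_0:
  fixes I :: "'i set"
  assumes "centering_characterization M dM Log TYPE('i)"
    and "finite I" "I \<noteq> {}" "u ` I \<subseteq> M" "mu \<in> M"
  shows "intrinsic_mean M dM I u mu \<longleftrightarrow> (\<Sum>i\<in>I. Log mu (u i)) = 0"
proof -
  have card: "real (card I) > 0"
    using assms(2,3) by (simp add: card_gt_0_iff)
  then have "(\<Sum>i\<in>I. 1 / real (card I)) = 1"
    by simp
  then have "intrinsic_mean M dM I u mu \<longleftrightarrow> (\<Sum>i\<in>I. (1 / real (card I)) *\<^sub>R Log mu (u i)) = 0"
    unfolding intrinsic_mean_def using assms
    by (intro weighted_intrinsic_mean_iff_centered) auto
  also have "\<dots> \<longleftrightarrow> (\<Sum>i\<in>I. Log mu (u i)) = 0"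
    using card by (simp add: scaleR_sum_right[symmetric])
  finally show ?thesis .
qed

lemma sum_product_stochastic_rows:
  assumes "\<forall>z\<in>Z. (\<Sum>e\<in>E. p (z, e)) = 1"
  shows "(\<Sum>ze\<in>Z \<times> E. p ze) = real (card Z)"
proof -
  have "(\<Sum>ze\<in>Z \<times> E. p ze) = (\<Sum>z\<in>Z. \<Sum>e\<in>E. p (z, e))"
    by (simp add: sum.cartesian_product split_def)
  also have "\<dots> = real (card Z)"
    using assms by simp
  finally show ?thesis .
qed

lemma sum_row_Log_eq_0_if_weighted_intrinsic_mean:
  fixes Z :: "'i set" and E :: "'e set" and p :: "'i \<times> 'e \<Rightarrow> real"
  assumes "centering_characterization M dM Log TYPE('i \<times> 'e)"
    and "finite Z" "Z \<noteq> {}" "finite E" "E \<noteq> {}"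
    and "\<forall>z\<in>Z. \<forall>e\<in>E. p (z, e) \<ge> 0" "\<forall>z\<in>Z. (\<Sum>e\<in>E. p (z, e)) = 1"
    and "\<forall>z\<in>Z. \<forall>e\<in>E. u (z, e) \<in> M"
    and mean: "weighted_intrinsic_mean M dM (Z \<times> E) (\<lambda>ze. p ze / (\<Sum>ze'\<in>Z \<times> E. p ze')) u mu"
  shows "(\<Sum>z\<in>Z. \<Sum>e\<in>E. p (z, e) *\<^sub>R Log mu (u (z, e))) = 0"
proof -
  let ?N = "real (card Z)"
  have mass: "(\<Sum>ze\<in>Z \<times> E. p ze) = ?N"
    using assms(7) by (rule sum_product_stochastic_rows)
  have N_pos: "?N > 0"
    using assms(2,3) by (simp add: card_gt_0_iff)
  have "(\<Sum>ze\<in>Z \<times> E. p ze / ?N) = 1"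
    using N_pos by (simp add: sum_divide_distrib[symmetric] mass)
  moreover have "mu \<in> M"
    using mean unfolding weighted_intrinsic_mean_def by blast
  ultimately have "(\<Sum>ze\<in>Z \<times> E. (p ze / ?N) *\<^sub>R Log mu (u ze)) = 0"
    using mean assms(1-6,8) unfolding mass
    by (subst weighted_intrinsic_mean_iff_centered[symmetric]) auto
  moreover have "(\<Sum>ze\<in>Z \<times> E. (p ze / ?N) *\<^sub>R Log mu (u ze))
      = (1 / ?N) *\<^sub>R (\<Sum>z\<in>Z. \<Sum>e\<in>E. p (z, e) *\<^sub>R Log mu (u (z, e)))"
    by (simp add: sum.cartesian_product split_def scaleR_sum_right)
  ultimately show ?thesis
    using N_pos by simp
qed

theorem lemma2:
  fixes M :: "'a::euclidean_space set"
    and dM :: "'a \<Rightarrow> 'a \<Rightarrow> real"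
    and Exp Log :: "'a \<Rightarrow> 'a \<Rightarrow> 'a"
    and Zs :: "'c set list"
    and E :: "'e set"
    and p :: "'c list \<times> 'e \<Rightarrow> real"
    and u :: "'c list \<times> 'e \<Rightarrow> 'a"
    and mu :: 'a
  defines "Z \<equiv> listset Zs"
  defines "w \<equiv> (\<lambda>ze. p ze / (\<Sum>ze'\<in>Z \<times> E. p ze'))"
  defines "v \<equiv> (\<lambda>z. \<Sum>e\<in>E. p (z, e) *\<^sub>R Log mu (u (z, e)))"
  defines "uz \<equiv> (\<lambda>z. Exp mu (v z))"
  assumes std1: "centering_characterization M dM Log TYPE('c list \<times> 'e)"
    and std2: "centering_characterization M dM Log TYPE('c list)"
    and Zs_fin: "\<forall>Zi\<in>set Zs. finite Zi \<and> Zi \<noteq> {}"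
    and E_fin: "finite E" and E_ne: "E \<noteq> {}"
    and p_nonneg: "\<forall>z\<in>Z. \<forall>e\<in>E. p (z, e) \<ge> 0"
    and p_sum: "\<forall>z\<in>Z. (\<Sum>e\<in>E. p (z, e)) = 1"
    and u_in: "\<forall>z\<in>Z. \<forall>e\<in>E. u (z, e) \<in> M"
    and mean: "weighted_intrinsic_mean M dM (Z \<times> E) w u mu"
    and Exp_in: "\<forall>z\<in>Z. uz z \<in> M"
    and Log_Exp: "\<forall>z\<in>Z. Log mu (Exp mu (v z)) = v z"
  shows "intrinsic_mean M dM Z uz mu"
proof -
  have Z_fin: "finite Z" and Z_ne: "Z \<noteq> {}"
    using Zs_fin unfolding Z_def by (auto simp: finite_listset listset_eq_empty_iff)
  have "(\<Sum>z\<in>Z. v z) = 0"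
    unfolding v_def using std1 Z_fin Z_ne E_fin E_ne p_nonneg p_sum u_in mean[unfolded w_def]
    by (rule sum_row_Log_eq_0_if_weighted_intrinsic_mean)
  then have "(\<Sum>z\<in>Z. Log mu (uz z)) = 0"
    using Log_Exp by (simp add: uz_def)
  moreover have "mu \<in> M"
    using mean unfolding weighted_intrinsic_mean_def by blast
  ultimately show ?thesis
    using std2 Z_fin Z_ne Exp_in by (subst intrinsic_mean_iff_sum_Log_eq_0) auto
qed

end
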